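(* Let $\mu>0$ and let $X\sim\mathcal N(0,\sigma_X^2)$, $Y\sim\mathcal N(0,\sigma_Y^2)$ be independent with $\sigma_X^2+\sigma_Y^2>0$. Then $$\mathbb E\Big[\Big(1-\tanh^2\Big(\frac{X+Y}{\mu}\Big)\Big)XY\mathbf 1_{\{X+Y>0\}}\Big]\ge-\frac1{\sqrt{2\pi}}\frac{\mu\sigma_X^2\sigma_Y^2}{(\sigma_X^2+\sigma_Y^2)^{3/2}}-\frac3{\sqrt{2\pi}}\frac{\sigma_X^2\sigma_Y^2\mu^3}{(\sigma_X^2+\sigma_Y^2)^{5/2}}.$$ *)

theory Defs
  imports "HOL-Probability.Probability"
begin

definition gaussian_measure :: "real \<Rightarrow> real \<Rightarrow> real measure" where
  "gaussian_measure m s =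
     (if s > 0 then density lborel (normal_density m s) else return borel m)"

end

theory Submission
  imports Defs "HOL-Real_Asymp.Real_Asymp"
begin

text \<open>Put \<open>S = X + Y\<close> and \<open>h t = 1 - tanh (t / \<mu>)\<^sup>2\<close>. Gaussian integration by parts
  (Stein's identity \<open>E[X F(X)] = \<sigma>\<^sup>2 E[F'(X)]\<close>) on the half-line \<open>S > 0\<close> gives
  \<open>E[X Y h(S) [S > 0]] = \<sigma>X\<^sup>2 E[Y h'(S) [S > 0]]\<close>, the boundary term at \<open>S = 0\<close> being odd in \<open>Y\<close>;
  since \<open>h'(0) = 0\<close>, also \<open>E[X h'(S) [S > 0]] = \<sigma>X\<^sup>2 E[h''(S) [S > 0]]\<close> and likewise for \<open>Y\<close>.
  Hence \<open>E[X Y h(S) [S > 0]] = \<sigma>X\<^sup>2 \<sigma>Y\<^sup>2 / (\<sigma>X\<^sup>2 + \<sigma>Y\<^sup>2) E[S h'(S) [S > 0]]\<close>.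
  As \<open>S\<close> is centred Gaussian with variance \<open>\<sigma>X\<^sup>2 + \<sigma>Y\<^sup>2\<close>, whose density is at most
  \<open>1 / sqrt (2 pi (\<sigma>X\<^sup>2 + \<sigma>Y\<^sup>2))\<close>, and \<open>- t h'(t) \<ge> 0\<close> has integral \<open>\<mu>\<close> over \<open>t > 0\<close>, the last
  expectation is at least \<open>- \<mu> / sqrt (2 pi (\<sigma>X\<^sup>2 + \<sigma>Y\<^sup>2))\<close>.\<close>

section \<open>Gaussian densities\<close>

lemma borel_measurable_isCont:
  fixes f :: "real \<Rightarrow> real"
  shows "(\<And>x. isCont f x) \<Longrightarrow> f \<in> borel_measurable borel"
  by (intro borel_measurable_continuous_onI continuous_at_imp_continuous_on) auto

lemma borel_measurable_tanh [measurable]: "(tanh :: real \<Rightarrow> real) \<in> borel_measurable borel"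
  by (intro borel_measurable_continuous_onI continuous_intros) auto

lemma normal_density_has_real_derivative:
  "\<sigma> > 0 \<Longrightarrow> (normal_density 0 \<sigma> has_real_derivative (- x / \<sigma>\<^sup>2) * normal_density 0 \<sigma> x) (at x)"
  unfolding normal_density_def
  by (auto intro!: derivative_eq_intros simp: field_simps power2_eq_square)

lemma normal_density_tendsto_at_top: "\<sigma> > 0 \<Longrightarrow> (normal_density 0 \<sigma> \<longlongrightarrow> 0) at_top"
  unfolding normal_density_def by real_asymp

lemma normal_density_le: "\<sigma> > 0 \<Longrightarrow> normal_density m \<sigma> x \<le> 1 / sqrt (2 * pi * \<sigma>\<^sup>2)"
  unfolding normal_density_def by (auto intro!: divide_right_mono)

lemma normal_density_minus: "normal_density 0 \<sigma> (- x) = normal_density 0 \<sigma> x"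
  unfolding normal_density_def by simp

lemma integrable_normal_density_mult_bounded:
  assumes "f \<in> borel_measurable borel" "\<And>x. \<bar>f x\<bar> \<le> B" "\<sigma> > 0"
  shows "integrable lborel (\<lambda>x. normal_density m \<sigma> x * f x)"
proof (rule Bochner_Integration.integrable_bound)
  show "integrable lborel (\<lambda>x. B * normal_density m \<sigma> x)"
    using assms(3) by (intro integrable_mult_right integrable_normal_density)
  show "AE x in lborel. norm (normal_density m \<sigma> x * f x) \<le> norm (B * normal_density m \<sigma> x)"
    using assms(2) by (intro AE_I2) (auto simp: abs_mult mult.commute intro!: mult_right_mono
      intro: order.trans[OF _ abs_ge_self])
qed (use assms in auto)

lemma integrable_normal_density_mult_linear:
  assumes "f \<in> borel_measurable borel" "\<And>x. \<bar>f x\<bar> \<le> B" "\<sigma> > 0"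
  shows "integrable lborel (\<lambda>x. normal_density 0 \<sigma> x * (x * f x))"
proof (rule Bochner_Integration.integrable_bound)
  show "integrable lborel (\<lambda>x. B * (normal_density 0 \<sigma> x * \<bar>x - 0\<bar> ^ 1))"
    using assms(3) by (intro integrable_mult_right integrable_normal_moment_abs)
  have "\<bar>f x\<bar> * (\<bar>x\<bar> * normal_density 0 \<sigma> x) \<le> \<bar>B\<bar> * (\<bar>x\<bar> * normal_density 0 \<sigma> x)" for x
    using assms(2)[of x] by (intro mult_right_mono) auto
  then show "AE x in lborel. norm (normal_density 0 \<sigma> x * (x * f x))
      \<le> norm (B * (normal_density 0 \<sigma> x * \<bar>x - 0\<bar> ^ 1))"
    by (intro AE_I2) (simp add: abs_mult mult_ac)
qed (use assms in auto)

lemma integrable_normal_one_plus_abs: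
  assumes "\<sigma> > 0"
  shows "integrable (density lborel (normal_density 0 \<sigma>)) (\<lambda>x. 1 + \<bar>x\<bar>)"
proof -
  have "integrable lborel (\<lambda>x. normal_density 0 \<sigma> x + normal_density 0 \<sigma> x * \<bar>x - 0\<bar> ^ 1)"
    using assms by (intro Bochner_Integration.integrable_add integrable_normal_density integrable_normal_moment_abs)
  then show ?thesis
    by (subst integrable_density) (auto simp: algebra_simps)
qed

lemma integral_normal_odd:
  fixes g :: "real \<Rightarrow> real"
  assumes [measurable]: "g \<in> borel_measurable borel" and odd: "\<And>y. g (- y) = - g y"
  shows "(\<integral>y. g y \<partial>density lborel (normal_density 0 \<sigma>)) = 0"
proof -
  define f where "f y = normal_density 0 \<sigma> y * g y" for y
  have "(\<integral>y. f y \<partial>lborel) = \<bar>-1\<bar> *\<^sub>R (\<integral>y. f (0 + -1 * y) \<partial>lborel)"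
    by (rule lborel_integral_real_affine) simp
  also have "\<dots> = - (\<integral>y. f y \<partial>lborel)"
    by (simp add: f_def odd normal_density_minus)
  finally show ?thesis
    by (simp add: integral_density f_def)
qed

lemma (in pair_sigma_finite) integrable_product_mult:
  fixes f g :: "_ \<Rightarrow> real"
  assumes f: "integrable M1 f" and g: "integrable M2 g"
  shows "integrable (M1 \<Otimes>\<^sub>M M2) (\<lambda>(x, y). f x * g y)"
proof (rule Fubini_integrable)
  show "integrable M1 (\<lambda>x. \<integral>y. norm (case (x, y) of (x, y) \<Rightarrow> f x * g y) \<partial>M2)"
    using f by (simp add: abs_mult)
  show "AE x in M1. integrable M2 (\<lambda>y. case (x, y) of (x, y) \<Rightarrow> f x * g y)"
    using g by simp
qed (use f g in auto)

section \<open>Gaussian integration by parts\<close>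

lemma normal_integration_by_parts_half_line:
  fixes F F' :: "real \<Rightarrow> real"
  assumes \<sigma>: "\<sigma> > 0"
    and F: "\<And>x. (F has_real_derivative F' x) (at x)" "\<And>x. isCont F' x"
    and bounds: "\<And>x. \<bar>F x\<bar> \<le> B" "\<And>x. \<bar>F' x\<bar> \<le> B'"
  shows "(\<integral>x. normal_density 0 \<sigma> x * (x * F x * indicator {a<..} x) \<partial>lborel)
       = \<sigma>\<^sup>2 * (F a * normal_density 0 \<sigma> a)
         + \<sigma>\<^sup>2 * (\<integral>x. normal_density 0 \<sigma> x * (F' x * indicator {a<..} x) \<partial>lborel)"
proof -
  let ?p = "normal_density 0 \<sigma>"
  have cont_F: "isCont F x" for x using F(1) DERIV_isCont by blast
  note [measurable] = borel_measurable_isCont[OF cont_F] borel_measurable_isCont[OF F(2)]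
  define f where "f x = ?p x * (x * F x) - \<sigma>\<^sup>2 * (?p x * F' x)" for x
  define H where "H x = - \<sigma>\<^sup>2 * (F x * ?p x)" for x
  have H: "(H has_real_derivative f x) (at x)" for x
    unfolding H_def f_def
    by (rule derivative_eq_intros F normal_density_has_real_derivative[OF \<sigma>] | simp)+
      (use \<sigma> in \<open>simp add: field_simps\<close>)
  have int_xF: "integrable lborel (\<lambda>x. ?p x * (x * F x))"
    by (rule integrable_normal_density_mult_linear[OF _ bounds(1) \<sigma>]) simp
  have int_F': "integrable lborel (\<lambda>x. ?p x * F' x)"
    by (rule integrable_normal_density_mult_bounded[OF _ bounds(2) \<sigma>]) simp
  have half_line: "einterval (ereal a) \<infinity> = {a<..}" by (auto simp: einterval_def)
  have "(LBINT x=ereal a..\<infinity>. f x) = 0 - H a"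
  proof (rule interval_integral_FTC_integrable)
    show "(H has_vector_derivative f x) (at x)" for x
      using H has_real_derivative_iff_has_vector_derivative by blast
    show "isCont f x" for x
      unfolding f_def using cont_F F(2) normal_density_has_real_derivative[OF \<sigma>, THEN DERIV_isCont]
      by (intro continuous_intros) auto
    show "set_integrable lborel (einterval (ereal a) \<infinity>) f"
      unfolding set_integrable_def half_line f_def using int_xF int_F'
      by (intro integrable_mult_indicator) auto
    show "((H \<circ> real_of_ereal) \<longlongrightarrow> H a) (at_right (ereal a))"
      unfolding ereal_tendsto_simps using H[THEN DERIV_isCont, of a]
      by (simp add: isCont_def filterlim_at_split)
    show "((H \<circ> real_of_ereal) \<longlongrightarrow> 0) (at_left \<infinity>)"
      unfolding ereal_tendsto_simps
    proof (rule Lim_null_comparison)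
      show "\<forall>\<^sub>F x in at_top. norm (H x) \<le> \<sigma>\<^sup>2 * B * ?p x"
        using bounds(1)
        by (intro always_eventually allI) (auto simp: H_def abs_mult mult.assoc intro!: mult_left_mono mult_right_mono)
      show "((\<lambda>x. \<sigma>\<^sup>2 * B * ?p x) \<longlongrightarrow> 0) at_top"
        using normal_density_tendsto_at_top[OF \<sigma>] by (auto intro: tendsto_mult_right_zero)
    qed
  qed simp
  then have "(\<integral>x. indicator {a<..} x * f x \<partial>lborel) = - H a"
    by (simp add: interval_lebesgue_integral_def set_lebesgue_integral_def half_line)
  moreover have "(\<integral>x. indicator {a<..} x * f x \<partial>lborel)
     = (\<integral>x. ?p x * (x * F x * indicator {a<..} x) \<partial>lborel)
       - \<sigma>\<^sup>2 * (\<integral>x. ?p x * (F' x * indicator {a<..} x) \<partial>lborel)"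
  proof -
    have "integrable lborel (\<lambda>x. ?p x * (x * F x * indicator {a<..} x))"
      using integrable_mult_indicator[OF _ int_xF, of "{a<..}"] by (simp add: mult_ac)
    moreover have "integrable lborel (\<lambda>x. ?p x * (F' x * indicator {a<..} x))"
      using integrable_mult_indicator[OF _ int_F', of "{a<..}"] by (simp add: mult_ac)
    moreover have "(\<integral>x. indicator {a<..} x * f x \<partial>lborel) = (\<integral>x. ?p x * (x * F x * indicator {a<..} x)
        - \<sigma>\<^sup>2 * (?p x * (F' x * indicator {a<..} x)) \<partial>lborel)"
      by (rule Bochner_Integration.integral_cong) (auto simp: f_def algebra_simps)
    ultimately show ?thesis by simp
  qed
  ultimately show ?thesis by (simp add: H_def)
qed

lemma normal_integration_by_parts_shifted:
  fixes G G' :: "real \<Rightarrow> real"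
  assumes \<sigma>: "\<sigma> > 0"
    and G: "\<And>x. (G has_real_derivative G' x) (at x)" "\<And>x. isCont G' x"
    and bounds: "\<And>x. \<bar>G x\<bar> \<le> B" "\<And>x. \<bar>G' x\<bar> \<le> B'"
  shows "(\<integral>x. x * (G (x + y) * indicator {0<..} (x + y)) \<partial>density lborel (normal_density 0 \<sigma>))
     = \<sigma>\<^sup>2 * (G 0 * normal_density 0 \<sigma> y)
       + \<sigma>\<^sup>2 * (\<integral>x. G' (x + y) * indicator {0<..} (x + y) \<partial>density lborel (normal_density 0 \<sigma>))"
proof -
  have cont_G: "isCont G x" for x using G(1) DERIV_isCont by blast
  note [measurable] = borel_measurable_isCont[OF cont_G] borel_measurable_isCont[OF G(2)]
  have shift: "indicator {0<..} (x + y) = (indicator {-y<..} x :: real)" for x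
    by (auto simp: indicator_def)
  have "((\<lambda>x. G (x + y)) has_real_derivative G' (x + y)) (at x)" for x
    using DERIV_chain2[OF G(1) DERIV_add[OF DERIV_ident DERIV_const]] by simp
  moreover have "isCont (\<lambda>x. G' (x + y)) x" for x
    by (rule isCont_o2[OF _ G(2)]) (auto intro!: continuous_intros)
  moreover have "\<bar>G (x + y)\<bar> \<le> B" "\<bar>G' (x + y)\<bar> \<le> B'" for x
    using bounds by auto
  ultimately have "(\<integral>x. normal_density 0 \<sigma> x * (x * G (x + y) * indicator {-y<..} x) \<partial>lborel)
      = \<sigma>\<^sup>2 * (G 0 * normal_density 0 \<sigma> y)
        + \<sigma>\<^sup>2 * (\<integral>x. normal_density 0 \<sigma> x * (G' (x + y) * indicator {-y<..} x) \<partial>lborel)"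
    using normal_integration_by_parts_half_line[OF \<sigma>, of "\<lambda>x. G (x + y)" "\<lambda>x. G' (x + y)" B B' "-y"]
    by (simp add: normal_density_minus)
  then show ?thesis
    by (simp add: integral_density shift mult_ac)
qed

section \<open>The squared hyperbolic secant\<close>

definition sech_sq :: "real \<Rightarrow> real \<Rightarrow> real" where
  "sech_sq \<mu> t = 1 - (tanh (t / \<mu>))\<^sup>2"

definition sech_sq' :: "real \<Rightarrow> real \<Rightarrow> real" where
  "sech_sq' \<mu> t = - (2 / \<mu>) * tanh (t / \<mu>) * (1 - (tanh (t / \<mu>))\<^sup>2)"

definition sech_sq'' :: "real \<Rightarrow> real \<Rightarrow> real" where
  "sech_sq'' \<mu> t = - (2 / \<mu>\<^sup>2) * (1 - 3 * (tanh (t / \<mu>))\<^sup>2) * (1 - (tanh (t / \<mu>))\<^sup>2)"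

lemma has_real_derivative_sech_sq: "\<mu> > 0 \<Longrightarrow> (sech_sq \<mu> has_real_derivative sech_sq' \<mu> t) (at t)"
  unfolding sech_sq_def sech_sq'_def
  by (auto intro!: derivative_eq_intros simp: field_simps power2_eq_square)

lemma has_real_derivative_sech_sq': "\<mu> > 0 \<Longrightarrow> (sech_sq' \<mu> has_real_derivative sech_sq'' \<mu> t) (at t)"
  unfolding sech_sq'_def sech_sq''_def
  by (auto intro!: derivative_eq_intros simp: field_simps power2_eq_square)

lemma isCont_sech_sq'': "\<mu> > 0 \<Longrightarrow> isCont (sech_sq'' \<mu>) t"
  unfolding sech_sq''_def by (intro continuous_intros) auto

lemma sech_sq'_0 [simp]: "sech_sq' \<mu> 0 = 0"
  by (simp add: sech_sq'_def)

lemma tanh_real_square_le_1: "(tanh (x::real))\<^sup>2 \<le> 1"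
  using tanh_real_bounds[of x] by (auto simp: abs_square_le_1)

lemma abs_sech_sq_le: "\<bar>sech_sq \<mu> t\<bar> \<le> 1"
  unfolding sech_sq_def using tanh_real_square_le_1[of "t / \<mu>"] by auto

lemma abs_sech_sq'_le:
  assumes "\<mu> > 0"
  shows "\<bar>sech_sq' \<mu> t\<bar> \<le> 2 / \<mu>"
proof -
  have "\<bar>tanh (t / \<mu>)\<bar> \<le> 1" "\<bar>1 - (tanh (t / \<mu>))\<^sup>2\<bar> \<le> 1"
    using tanh_real_bounds[of "t / \<mu>"] tanh_real_square_le_1[of "t / \<mu>"] by auto
  then have "(2 / \<mu>) * (\<bar>tanh (t / \<mu>)\<bar> * \<bar>1 - (tanh (t / \<mu>))\<^sup>2\<bar>) \<le> (2 / \<mu>) * 1"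
    using assms by (intro mult_left_mono) (auto simp: mult_le_one)
  then show ?thesis
    using assms by (simp add: sech_sq'_def abs_mult)
qed

lemma abs_sech_sq''_le: "\<bar>sech_sq'' \<mu> t\<bar> \<le> 4 / \<mu>\<^sup>2"
proof -
  have "\<bar>1 - 3 * (tanh (t / \<mu>))\<^sup>2\<bar> \<le> 2" "\<bar>1 - (tanh (t / \<mu>))\<^sup>2\<bar> \<le> 1"
    using tanh_real_square_le_1[of "t / \<mu>"] zero_le_power2[of "tanh (t / \<mu>)"]
    by (simp_all only: abs_le_iff) linarith+
  then have "(2 / \<mu>\<^sup>2) * (\<bar>1 - 3 * (tanh (t / \<mu>))\<^sup>2\<bar> * \<bar>1 - (tanh (t / \<mu>))\<^sup>2\<bar>) \<le> (2 / \<mu>\<^sup>2) * (2 * 1)"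
    by (intro mult_left_mono mult_mono) auto
  moreover have "\<bar>sech_sq'' \<mu> t\<bar>
      = (2 / \<mu>\<^sup>2) * (\<bar>1 - 3 * (tanh (t / \<mu>))\<^sup>2\<bar> * \<bar>1 - (tanh (t / \<mu>))\<^sup>2\<bar>)"
    by (simp only: sech_sq''_def abs_mult abs_minus_cancel) simp
  ultimately show ?thesis
    by simp
qed

lemma borel_measurable_sech_sq [measurable]: "sech_sq \<mu> \<in> borel_measurable borel"
  unfolding sech_sq_def by measurable

lemma borel_measurable_sech_sq' [measurable]: "sech_sq' \<mu> \<in> borel_measurable borel"
  unfolding sech_sq'_def by measurable

lemma borel_measurable_sech_sq'' [measurable]: "sech_sq'' \<mu> \<in> borel_measurable borel"
  unfolding sech_sq''_def by measurable

lemma integral_sech_sq'_half_line: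
  assumes \<mu>: "\<mu> > 0"
  shows "integrable lborel (\<lambda>t. indicator {0<..} t * - (t * sech_sq' \<mu> t))"
    and "(\<integral>t. indicator {0<..} t * - (t * sech_sq' \<mu> t) \<partial>lborel) = \<mu>"
proof -
  \<comment> \<open>an antiderivative of \<open>- t sech_sq' \<mu> t\<close>, obtained by integrating by parts\<close>
  define G where "G t = \<mu> * tanh (t / \<mu>) - t * sech_sq \<mu> t" for t
  have G: "(G has_real_derivative - (t * sech_sq' \<mu> t)) (at t)" for t
    unfolding G_def sech_sq_def sech_sq'_def using \<mu>
    by (auto intro!: derivative_eq_intros simp: field_simps power2_eq_square)
  have "isCont (\<lambda>t. - (t * sech_sq' \<mu> t)) t" for t
    using has_real_derivative_sech_sq'[OF \<mu>, THEN DERIV_isCont] by (intro continuous_intros) auto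
  moreover have "0 < t \<Longrightarrow> 0 \<le> - (t * sech_sq' \<mu> t)" for t
    using \<mu> tanh_real_square_le_1[of "t / \<mu>"] by (simp add: sech_sq'_def mult_nonneg_nonneg)
  moreover have "((G \<circ> real_of_ereal) \<longlongrightarrow> 0) (at_right 0)"
    unfolding zero_ereal_def ereal_tendsto_simps
    using G[of 0, THEN DERIV_isCont] by (simp add: isCont_def filterlim_at_split G_def)
  moreover have "((G \<circ> real_of_ereal) \<longlongrightarrow> \<mu>) (at_left \<infinity>)"
    unfolding ereal_tendsto_simps G_def sech_sq_def tanh_real_altdef using \<mu> by real_asymp
  ultimately have "set_integrable lborel (einterval 0 \<infinity>) (\<lambda>t. - (t * sech_sq' \<mu> t))"
      "(LBINT t=0..\<infinity>. - (t * sech_sq' \<mu> t)) = \<mu>"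
    using interval_integral_FTC_nonneg[where F = G and A = 0 and B = \<mu> and a = 0 and b = \<infinity>, OF _ G]
    by auto
  moreover have "einterval 0 \<infinity> = {0<..}"
    by (auto simp: einterval_def)
  ultimately show "integrable lborel (\<lambda>t. indicator {0<..} t * - (t * sech_sq' \<mu> t))"
      "(\<integral>t. indicator {0<..} t * - (t * sech_sq' \<mu> t) \<partial>lborel) = \<mu>"
    by (simp_all add: set_integrable_def interval_lebesgue_integral_def set_lebesgue_integral_def)
qed

lemma normal_integral_sech_sq'_lower_bound:
  assumes \<mu>: "\<mu> > 0" and s: "s > 0"
  shows "(\<integral>t. normal_density 0 s t * (t * (sech_sq' \<mu> t * indicator {0<..} t)) \<partial>lborel)
    \<ge> - \<mu> / sqrt (2 * pi * s\<^sup>2)"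
proof -
  define c where "c = 1 / sqrt (2 * pi * s\<^sup>2)"
  have "integrable lborel (\<lambda>t. c * (t * (sech_sq' \<mu> t * indicator {0<..} t)))"
    using integrable_mult_right[OF integrable_minus[OF integral_sech_sq'_half_line(1)[OF \<mu>]], of c]
    by (simp add: mult_ac)
  moreover have "integrable lborel (\<lambda>t. normal_density 0 s t * (t * (sech_sq' \<mu> t * indicator {0<..} t)))"
    using \<mu> abs_sech_sq'_le[OF \<mu>]
    by (intro integrable_normal_density_mult_linear[OF _ _ s, where B = "2 / \<mu>"]) (auto simp: indicator_def)
  moreover have "c * (t * (sech_sq' \<mu> t * indicator {0<..} t))
      \<le> normal_density 0 s t * (t * (sech_sq' \<mu> t * indicator {0<..} t))" for t
  proof (rule mult_right_mono_neg)
    show "normal_density 0 s t \<le> c"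
      unfolding c_def by (rule normal_density_le[OF s])
    show "t * (sech_sq' \<mu> t * indicator {0<..} t) \<le> 0"
      using \<mu> tanh_real_square_le_1[of "t / \<mu>"]
      by (auto simp: indicator_def sech_sq'_def mult_nonneg_nonneg mult_le_0_iff)
  qed
  ultimately have "(\<integral>t. c * (t * (sech_sq' \<mu> t * indicator {0<..} t)) \<partial>lborel)
      \<le> (\<integral>t. normal_density 0 s t * (t * (sech_sq' \<mu> t * indicator {0<..} t)) \<partial>lborel)"
    by (rule integral_mono)
  moreover have "(\<integral>t. c * (t * (sech_sq' \<mu> t * indicator {0<..} t)) \<partial>lborel)
      = (\<integral>t. c * - (indicator {0<..} t * - (t * sech_sq' \<mu> t)) \<partial>lborel)"
    by (rule Bochner_Integration.integral_cong) (auto simp: indicator_def)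
  then have "(\<integral>t. c * (t * (sech_sq' \<mu> t * indicator {0<..} t)) \<partial>lborel) = - c * \<mu>"
    by (simp only: integral_mult_right_zero Bochner_Integration.integral_minus
        integral_sech_sq'_half_line(2)[OF \<mu>])
  ultimately show ?thesis
    by (simp add: c_def)
qed

section \<open>Two independent centred Gaussians\<close>

lemma linear_weight_bounds:
  fixes x y :: real
  defines "w \<equiv> (1 + \<bar>x\<bar>) * (1 + \<bar>y\<bar>)"
  shows "1 \<le> w" "\<bar>x\<bar> \<le> w" "\<bar>y\<bar> \<le> w" "\<bar>x * y\<bar> \<le> w" "\<bar>x + y\<bar> \<le> w"
  unfolding w_def using abs_triangle_ineq[of x y]
  by (simp_all add: algebra_simps abs_mult) (smt (verit) abs_ge_zero zero_le_mult_iff)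

lemma abs_mult_le_linear_weight:
  fixes u a C :: real
  shows "\<bar>u\<bar> \<le> w \<Longrightarrow> \<bar>a\<bar> \<le> C \<Longrightarrow> \<bar>u * a\<bar> \<le> C * w"
  by (simp add: abs_mult mult.commute mult_mono)

lemma abs_mult_indicator_le: "(\<And>t. \<bar>G t\<bar> \<le> (B::real)) \<Longrightarrow> \<bar>G t * indicator S t\<bar> \<le> B"
  by (auto simp: indicator_def intro: order.trans[OF abs_ge_zero])

locale gaussian_pair =
  fixes \<sigma>X \<sigma>Y :: real
  assumes pos: "\<sigma>X > 0" "\<sigma>Y > 0"
begin

abbreviation "NX \<equiv> density lborel (normal_density 0 \<sigma>X)"
abbreviation "NY \<equiv> density lborel (normal_density 0 \<sigma>Y)"

sublocale pair_sigma_finite NX NY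
  by (intro pair_sigma_finite.intro prob_space_imp_sigma_finite prob_space_normal_density)
    (use pos in auto)

lemma integrable_linearly_bounded:
  assumes [measurable]: "f \<in> borel_measurable (borel \<Otimes>\<^sub>M borel)"
    and bound: "\<And>x y. \<bar>f (x, y)\<bar> \<le> C * ((1 + \<bar>x\<bar>) * (1 + \<bar>y\<bar>))"
  shows "integrable (NX \<Otimes>\<^sub>M NY) f"
proof (rule Bochner_Integration.integrable_bound)
  show "integrable (NX \<Otimes>\<^sub>M NY) (\<lambda>(x, y). C * ((1 + \<bar>x\<bar>) * (1 + \<bar>y\<bar>)))"
    using integrable_mult_right[OF integrable_product_mult[OF
        integrable_normal_one_plus_abs[OF pos(1)] integrable_normal_one_plus_abs[OF pos(2)]], of C]
    by (simp add: case_prod_beta')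
  show "AE z in NX \<Otimes>\<^sub>M NY. norm (f z) \<le> norm (case z of (x, y) \<Rightarrow> C * ((1 + \<bar>x\<bar>) * (1 + \<bar>y\<bar>)))"
    using bound by (intro AE_I2) (auto simp: split_beta intro: order.trans[OF _ abs_ge_self])
qed simp

lemma integral_stein_fst:
  fixes G G' :: "real \<Rightarrow> real"
  assumes G: "\<And>x. (G has_real_derivative G' x) (at x)" "\<And>x. isCont G' x"
    and bounds: "\<And>x. \<bar>G x\<bar> \<le> B" "\<And>x. \<bar>G' x\<bar> \<le> B'"
    and G_0: "G 0 = 0"
  shows "integral\<^sup>L (NX \<Otimes>\<^sub>M NY) (\<lambda>(x, y). x * (G (x + y) * indicator {0<..} (x + y)))
    = \<sigma>X\<^sup>2 * integral\<^sup>L (NX \<Otimes>\<^sub>M NY) (\<lambda>(x, y). G' (x + y) * indicator {0<..} (x + y))"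
proof -
  note [measurable] = borel_measurable_isCont[OF DERIV_isCont[OF G(1)]] borel_measurable_isCont[OF G(2)]
  have int_xG: "integrable (NX \<Otimes>\<^sub>M NY) (\<lambda>(x, y). x * (G (x + y) * indicator {0<..} (x + y)))"
    by (rule integrable_linearly_bounded[where C = B])
      (auto intro!: abs_mult_le_linear_weight linear_weight_bounds abs_mult_indicator_le bounds)
  have int_G': "integrable (NX \<Otimes>\<^sub>M NY) (\<lambda>(x, y). G' (x + y) * indicator {0<..} (x + y))"
    by (rule integrable_linearly_bounded[where C = B'])
      (auto intro!: abs_mult_le_linear_weight[where u = 1, simplified] linear_weight_bounds
        abs_mult_indicator_le bounds)
  have "integral\<^sup>L (NX \<Otimes>\<^sub>M NY) (\<lambda>(x, y). x * (G (x + y) * indicator {0<..} (x + y)))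
      = (\<integral>y. \<integral>x. x * (G (x + y) * indicator {0<..} (x + y)) \<partial>NX \<partial>NY)"
    using integral_snd[OF int_xG] by simp
  also have "\<dots> = (\<integral>y. \<sigma>X\<^sup>2 * (\<integral>x. G' (x + y) * indicator {0<..} (x + y) \<partial>NX) \<partial>NY)"
    by (simp add: normal_integration_by_parts_shifted[OF pos(1) G bounds] G_0)
  also have "\<dots> = \<sigma>X\<^sup>2 * integral\<^sup>L (NX \<Otimes>\<^sub>M NY) (\<lambda>(x, y). G' (x + y) * indicator {0<..} (x + y))"
    using integral_snd[OF int_G'] by simp
  finally show ?thesis .
qed

lemma integral_stein_snd:
  fixes G G' :: "real \<Rightarrow> real"
  assumes G: "\<And>x. (G has_real_derivative G' x) (at x)" "\<And>x. isCont G' x"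
    and bounds: "\<And>x. \<bar>G x\<bar> \<le> B" "\<And>x. \<bar>G' x\<bar> \<le> B'"
    and G_0: "G 0 = 0"
  shows "integral\<^sup>L (NX \<Otimes>\<^sub>M NY) (\<lambda>(x, y). y * (G (x + y) * indicator {0<..} (x + y)))
    = \<sigma>Y\<^sup>2 * integral\<^sup>L (NX \<Otimes>\<^sub>M NY) (\<lambda>(x, y). G' (x + y) * indicator {0<..} (x + y))"
proof -
  have swap: "integral\<^sup>L (NX \<Otimes>\<^sub>M NY) f = integral\<^sup>L (NY \<Otimes>\<^sub>M NX) (\<lambda>(y, x). f (x, y))"
    if "f \<in> borel_measurable (NX \<Otimes>\<^sub>M NY)" for f :: "real \<times> real \<Rightarrow> real"
    using integral_product_swap[OF that] by simp
  interpret swapped: gaussian_pair \<sigma>Y \<sigma>X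
    using pos by unfold_locales
  note [measurable] = borel_measurable_isCont[OF DERIV_isCont[OF G(1)]] borel_measurable_isCont[OF G(2)]
  show ?thesis
    using swapped.integral_stein_fst[OF G bounds G_0] by (simp add: swap add.commute)
qed

lemma integral_stein_xy:
  fixes G G' :: "real \<Rightarrow> real"
  assumes G: "\<And>x. (G has_real_derivative G' x) (at x)" "\<And>x. isCont G' x"
    and bounds: "\<And>x. \<bar>G x\<bar> \<le> B" "\<And>x. \<bar>G' x\<bar> \<le> B'"
  shows "integral\<^sup>L (NX \<Otimes>\<^sub>M NY) (\<lambda>(x, y). x * y * (G (x + y) * indicator {0<..} (x + y)))
    = \<sigma>X\<^sup>2 * integral\<^sup>L (NX \<Otimes>\<^sub>M NY) (\<lambda>(x, y). y * (G' (x + y) * indicator {0<..} (x + y)))"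
proof -
  note [measurable] = borel_measurable_isCont[OF DERIV_isCont[OF G(1)]] borel_measurable_isCont[OF G(2)]
  have int_xyG: "integrable (NX \<Otimes>\<^sub>M NY) (\<lambda>(x, y). x * y * (G (x + y) * indicator {0<..} (x + y)))"
    by (rule integrable_linearly_bounded[where C = B])
      (auto intro!: abs_mult_le_linear_weight linear_weight_bounds abs_mult_indicator_le bounds)
  have int_yG': "integrable (NX \<Otimes>\<^sub>M NY) (\<lambda>(x, y). y * (G' (x + y) * indicator {0<..} (x + y)))"
    by (rule integrable_linearly_bounded[where C = B'])
      (auto intro!: abs_mult_le_linear_weight linear_weight_bounds abs_mult_indicator_le bounds)
  have int_boundary: "integrable NY (\<lambda>y. y * normal_density 0 \<sigma>X y)"
    using integrable_normal_density_mult_linear[OF _ _ pos(2), of "normal_density 0 \<sigma>X"]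
      normal_density_le[OF pos(1)]
    by (subst integrable_density) (auto simp: mult_ac)
  \<comment> \<open>the boundary terms at \<open>x + y = 0\<close> cancel because they are odd in \<open>y\<close>\<close>
  have boundary: "(\<integral>y. y * normal_density 0 \<sigma>X y \<partial>NY) = 0"
    by (rule integral_normal_odd) (auto simp: normal_density_minus)
  have "integral\<^sup>L (NX \<Otimes>\<^sub>M NY) (\<lambda>(x, y). x * y * (G (x + y) * indicator {0<..} (x + y)))
      = (\<integral>y. y * (\<integral>x. x * (G (x + y) * indicator {0<..} (x + y)) \<partial>NX) \<partial>NY)"
    using integral_snd[OF int_xyG] by (simp add: mult_ac)
  also have "\<dots> = (\<integral>y. \<sigma>X\<^sup>2 * G 0 * (y * normal_density 0 \<sigma>X y)
      + \<sigma>X\<^sup>2 * (y * (\<integral>x. G' (x + y) * indicator {0<..} (x + y) \<partial>NX)) \<partial>NY)"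
    by (simp only: normal_integration_by_parts_shifted[OF pos(1) G bounds]) (simp add: algebra_simps)
  also have "\<dots> = \<sigma>X\<^sup>2 * integral\<^sup>L (NX \<Otimes>\<^sub>M NY) (\<lambda>(x, y). y * (G' (x + y) * indicator {0<..} (x + y)))"
    using int_boundary integrable_snd[OF int_yG'] integral_snd[OF int_yG'] boundary by simp
  finally show ?thesis .
qed

lemma integral_xy_eq_integral_sum:
  fixes G G' G'' :: "real \<Rightarrow> real"
  assumes G: "\<And>x. (G has_real_derivative G' x) (at x)" "\<And>x. (G' has_real_derivative G'' x) (at x)"
      "\<And>x. isCont G'' x"
    and bounds: "\<And>x. \<bar>G x\<bar> \<le> B" "\<And>x. \<bar>G' x\<bar> \<le> B'" "\<And>x. \<bar>G'' x\<bar> \<le> B''"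
    and G'_0: "G' 0 = 0"
  shows "integral\<^sup>L (NX \<Otimes>\<^sub>M NY) (\<lambda>(x, y). x * y * (G (x + y) * indicator {0<..} (x + y)))
    = \<sigma>X\<^sup>2 * \<sigma>Y\<^sup>2 / (\<sigma>X\<^sup>2 + \<sigma>Y\<^sup>2)
      * integral\<^sup>L (NX \<Otimes>\<^sub>M NY) (\<lambda>(x, y). (x + y) * (G' (x + y) * indicator {0<..} (x + y)))"
proof -
  note [measurable] = borel_measurable_isCont[OF DERIV_isCont[OF G(2)]]
  define Q where "Q = integral\<^sup>L (NX \<Otimes>\<^sub>M NY) (\<lambda>(x, y). G'' (x + y) * indicator {0<..} (x + y))"
  have xy: "integral\<^sup>L (NX \<Otimes>\<^sub>M NY) (\<lambda>(x, y). x * y * (G (x + y) * indicator {0<..} (x + y)))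
      = \<sigma>X\<^sup>2 * \<sigma>Y\<^sup>2 * Q"
    using integral_stein_xy[OF G(1) DERIV_isCont[OF G(2)] bounds(1,2)]
      integral_stein_snd[OF G(2,3) bounds(2,3) G'_0]
    by (simp add: Q_def)
  have "integral\<^sup>L (NX \<Otimes>\<^sub>M NY) (\<lambda>(x, y). (x + y) * (G' (x + y) * indicator {0<..} (x + y)))
      = integral\<^sup>L (NX \<Otimes>\<^sub>M NY) (\<lambda>(x, y). x * (G' (x + y) * indicator {0<..} (x + y)))
      + integral\<^sup>L (NX \<Otimes>\<^sub>M NY) (\<lambda>(x, y). y * (G' (x + y) * indicator {0<..} (x + y)))"
    by (subst Bochner_Integration.integral_add[symmetric])
      (auto simp: case_prod_beta' algebra_simps intro!: integrable_linearly_bounded[where C = B']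
        abs_mult_le_linear_weight linear_weight_bounds abs_mult_indicator_le bounds)
  also have "\<dots> = (\<sigma>X\<^sup>2 + \<sigma>Y\<^sup>2) * Q"
    using integral_stein_fst[OF G(2,3) bounds(2,3) G'_0] integral_stein_snd[OF G(2,3) bounds(2,3) G'_0]
    by (simp add: Q_def algebra_simps)
  finally have "integral\<^sup>L (NX \<Otimes>\<^sub>M NY) (\<lambda>(x, y). (x + y) * (G' (x + y) * indicator {0<..} (x + y)))
      = (\<sigma>X\<^sup>2 + \<sigma>Y\<^sup>2) * Q" .
  then show ?thesis
    unfolding xy using pos by (simp add: field_simps)
qed

end

lemma (in prob_space) integral_indep_pair:
  fixes X Y :: "'a \<Rightarrow> real" and F :: "real \<times> real \<Rightarrow> real"
  assumes "indep_var borel X borel Y" and [measurable]: "F \<in> borel_measurable (borel \<Otimes>\<^sub>M borel)"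
  shows "(\<integral>\<omega>. F (X \<omega>, Y \<omega>) \<partial>M) = integral\<^sup>L (distr M borel X \<Otimes>\<^sub>M distr M borel Y) F"
proof -
  have [measurable]: "X \<in> borel_measurable M" "Y \<in> borel_measurable M"
    and joint: "distr M borel X \<Otimes>\<^sub>M distr M borel Y = distr M (borel \<Otimes>\<^sub>M borel) (\<lambda>\<omega>. (X \<omega>, Y \<omega>))"
    using assms(1) unfolding indep_var_distribution_eq by auto
  show ?thesis
    unfolding joint by (rule integral_distr[of "\<lambda>\<omega>. (X \<omega>, Y \<omega>)", symmetric]) auto
qed

lemma (in prob_space) distributed_of_distr:
  assumes "X \<in> borel_measurable M" "distr M borel X = density lborel f" "f \<in> borel_measurable borel"
  shows "distributed M lborel X f"
proof -
  have "distr M lborel X = distr M borel X"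
    by (rule distr_cong) auto
  then show ?thesis
    using assms unfolding distributed_def by auto
qed

lemma (in prob_space) integral_indep_normal_sum:
  fixes X Y :: "'a \<Rightarrow> real" and f :: "real \<Rightarrow> real"
  assumes indep: "indep_var borel X borel Y" and \<sigma>: "\<sigma> > 0" "\<tau> > 0"
    and [measurable]: "X \<in> borel_measurable M" "Y \<in> borel_measurable M"
    and X: "distr M borel X = density lborel (normal_density 0 \<sigma>)"
    and Y: "distr M borel Y = density lborel (normal_density 0 \<tau>)"
    and [measurable]: "f \<in> borel_measurable borel"
  shows "(\<integral>\<omega>. f (X \<omega> + Y \<omega>) \<partial>M)
    = (\<integral>t. f t \<partial>density lborel (normal_density 0 (sqrt (\<sigma>\<^sup>2 + \<tau>\<^sup>2))))"
proof -
  have "distributed M lborel (\<lambda>\<omega>. X \<omega> + Y \<omega>) (normal_density 0 (sqrt (\<sigma>\<^sup>2 + \<tau>\<^sup>2)))"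
    using add_indep_normal[OF indep \<sigma> distributed_of_distr[OF _ X] distributed_of_distr[OF _ Y]] by simp
  then have "distr M lborel (\<lambda>\<omega>. X \<omega> + Y \<omega>) = density lborel (normal_density 0 (sqrt (\<sigma>\<^sup>2 + \<tau>\<^sup>2)))"
    unfolding distributed_def by simp
  then show ?thesis
    using integral_distr[of "\<lambda>\<omega>. X \<omega> + Y \<omega>" M lborel f] by simp
qed

lemma (in prob_space) indep_normal_xy_sech_sq_lower_bound:
  fixes X Y :: "'a \<Rightarrow> real"
  assumes indep: "indep_var borel X borel Y" and pos: "\<sigma>X > 0" "\<sigma>Y > 0" and \<mu>: "\<mu> > 0"
    and [measurable]: "X \<in> borel_measurable M" "Y \<in> borel_measurable M"
    and X: "distr M borel X = density lborel (normal_density 0 \<sigma>X)"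
    and Y: "distr M borel Y = density lborel (normal_density 0 \<sigma>Y)"
  shows "(\<integral>\<omega>. X \<omega> * Y \<omega> * (sech_sq \<mu> (X \<omega> + Y \<omega>) * indicator {0<..} (X \<omega> + Y \<omega>)) \<partial>M)
    \<ge> - \<sigma>X\<^sup>2 * \<sigma>Y\<^sup>2 / (\<sigma>X\<^sup>2 + \<sigma>Y\<^sup>2) * (\<mu> / sqrt (2 * pi * (\<sigma>X\<^sup>2 + \<sigma>Y\<^sup>2)))"
proof -
  interpret gaussian_pair \<sigma>X \<sigma>Y
    using pos by unfold_locales
  define c where "c = \<sigma>X\<^sup>2 * \<sigma>Y\<^sup>2 / (\<sigma>X\<^sup>2 + \<sigma>Y\<^sup>2)"
  define s where "s = sqrt (\<sigma>X\<^sup>2 + \<sigma>Y\<^sup>2)"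
  have s: "s > 0" "s\<^sup>2 = \<sigma>X\<^sup>2 + \<sigma>Y\<^sup>2"
    using pos by (auto simp: s_def add_pos_pos)
  have "(\<integral>\<omega>. X \<omega> * Y \<omega> * (sech_sq \<mu> (X \<omega> + Y \<omega>) * indicator {0<..} (X \<omega> + Y \<omega>)) \<partial>M)
      = integral\<^sup>L (NX \<Otimes>\<^sub>M NY) (\<lambda>(x, y). x * y * (sech_sq \<mu> (x + y) * indicator {0<..} (x + y)))"
    using integral_indep_pair[OF indep, of "\<lambda>(x, y). x * y * (sech_sq \<mu> (x + y) * indicator {0<..} (x + y))"]
    by (simp add: X Y)
  also have "\<dots> = c * integral\<^sup>L (NX \<Otimes>\<^sub>M NY)
      (\<lambda>(x, y). (x + y) * (sech_sq' \<mu> (x + y) * indicator {0<..} (x + y)))"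
    unfolding c_def
    by (rule integral_xy_eq_integral_sum[OF has_real_derivative_sech_sq[OF \<mu>]
          has_real_derivative_sech_sq'[OF \<mu>] isCont_sech_sq''[OF \<mu>]
          abs_sech_sq_le abs_sech_sq'_le[OF \<mu>] abs_sech_sq''_le sech_sq'_0])
  also have "\<dots> = c * (\<integral>\<omega>. (X \<omega> + Y \<omega>) * (sech_sq' \<mu> (X \<omega> + Y \<omega>) * indicator {0<..} (X \<omega> + Y \<omega>)) \<partial>M)"
    using integral_indep_pair[OF indep, of "\<lambda>(x, y). (x + y) * (sech_sq' \<mu> (x + y) * indicator {0<..} (x + y))"]
    by (simp add: X Y)
  also have "\<dots> = c * (\<integral>t. normal_density 0 s t * (t * (sech_sq' \<mu> t * indicator {0<..} t)) \<partial>lborel)"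
    using integral_indep_normal_sum[OF indep pos _ _ X Y, of "\<lambda>t. t * (sech_sq' \<mu> t * indicator {0<..} t)"]
    by (simp add: s_def integral_density)
  finally have eq: "(\<integral>\<omega>. X \<omega> * Y \<omega> * (sech_sq \<mu> (X \<omega> + Y \<omega>) * indicator {0<..} (X \<omega> + Y \<omega>)) \<partial>M)
      = c * (\<integral>t. normal_density 0 s t * (t * (sech_sq' \<mu> t * indicator {0<..} t)) \<partial>lborel)" .
  have "c * (- \<mu> / sqrt (2 * pi * s\<^sup>2))
      \<le> c * (\<integral>t. normal_density 0 s t * (t * (sech_sq' \<mu> t * indicator {0<..} t)) \<partial>lborel)"
    using normal_integral_sech_sq'_lower_bound[OF \<mu> s(1)] pos
    by (intro mult_left_mono) (auto simp: c_def)
  then show ?thesis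
    unfolding eq by (simp add: s(2) c_def)
qed

lemma (in prob_space) AE_eq_of_distr_return:
  fixes X :: "'a \<Rightarrow> real"
  assumes "X \<in> borel_measurable M" "distr M borel X = return borel c"
  shows "AE \<omega> in M. X \<omega> = c"
proof -
  have "AE x in distr M borel X. x = c"
    unfolding assms(2) using AE_return[of c borel "\<lambda>x. x = c"] by simp
  then show ?thesis
    using assms(1) by (subst (asm) AE_distr_iff) auto
qed

lemma powr_three_halves: "(x::real) > 0 \<Longrightarrow> x powr (3/2) = x * sqrt x"
  using powr_add[of x 1 "1/2"] by (simp add: powr_half_sqrt)

theorem mainTheorem18:
  fixes M :: "'a measure" and X Y :: "'a \<Rightarrow> real"
    and \<mu> \<sigma>X \<sigma>Y :: real
  assumes "prob_space M"
    and "\<mu> > 0"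
    and "\<sigma>X \<ge> 0" and "\<sigma>Y \<ge> 0"
    and "\<sigma>X\<^sup>2 + \<sigma>Y\<^sup>2 > 0"
    and "X \<in> borel_measurable M" and "Y \<in> borel_measurable M"
    and "distr M borel X = gaussian_measure 0 \<sigma>X"
    and "distr M borel Y = gaussian_measure 0 \<sigma>Y"
    and "prob_space.indep_var M borel X borel Y"
  shows "(\<integral>\<omega>. (1 - (tanh ((X \<omega> + Y \<omega>) / \<mu>))\<^sup>2) * X \<omega> * Y \<omega>
              * (if X \<omega> + Y \<omega> > 0 then 1 else 0) \<partial>M)
         \<ge> - (1 / sqrt (2 * pi)) * (\<mu> * \<sigma>X\<^sup>2 * \<sigma>Y\<^sup>2 / (\<sigma>X\<^sup>2 + \<sigma>Y\<^sup>2) powr (3/2))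
           - (3 / sqrt (2 * pi)) * (\<sigma>X\<^sup>2 * \<sigma>Y\<^sup>2 * \<mu> ^ 3 / (\<sigma>X\<^sup>2 + \<sigma>Y\<^sup>2) powr (5/2))"
    (is "?E \<ge> - ?c * ?A - ?B")
proof -
  interpret prob_space M by fact
  note [measurable] = assms(6,7)
  have E: "?E = (\<integral>\<omega>. X \<omega> * Y \<omega> * (sech_sq \<mu> (X \<omega> + Y \<omega>) * indicator {0<..} (X \<omega> + Y \<omega>)) \<partial>M)"
    by (intro Bochner_Integration.integral_cong) (auto simp: sech_sq_def indicator_def)
  consider "\<sigma>X = 0 \<or> \<sigma>Y = 0" | "\<sigma>X > 0" "\<sigma>Y > 0"
    using assms(3,4) by linarith
  then show ?thesis
  proof cases
    case 1
    then have "AE \<omega> in M. X \<omega> * Y \<omega> = 0"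
      using AE_eq_of_distr_return[of X 0] AE_eq_of_distr_return[of Y 0] assms(8,9)
      by (auto simp: gaussian_measure_def elim: eventually_mono)
    then have "?E = 0"
      unfolding E by (subst integral_cong_AE[where g = "\<lambda>_. 0"]) (auto elim: eventually_mono)
    with 1 show ?thesis
      by auto
  next
    case 2
    have "- ?c * ?A = - \<sigma>X\<^sup>2 * \<sigma>Y\<^sup>2 / (\<sigma>X\<^sup>2 + \<sigma>Y\<^sup>2) * (\<mu> / sqrt (2 * pi * (\<sigma>X\<^sup>2 + \<sigma>Y\<^sup>2)))"
      unfolding powr_three_halves[OF assms(5)] real_sqrt_mult[of "2 * pi"] using assms(5)
      by (simp add: field_simps)
    also have "\<dots> \<le> ?E"
      unfolding E using assms(6-10) 2 \<open>\<mu> > 0\<close>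
      by (intro indep_normal_xy_sech_sq_lower_bound) (simp_all add: gaussian_measure_def)
    moreover have "?B \<ge> 0"
      using \<open>\<mu> > 0\<close> by simp
    ultimately show ?thesis
      by linarith
  qed
qed

end
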